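(* Let $d,n\ge1$, $k\ge0$, and $\Sigma\in\mathbb{R}^{d\times d}$ positive definite. Let $x^{(1)},\dots,x^{(n+1)}$ be i.i.d. $\mathcal{N}(0,\Sigma)$, $w_\star\sim\mathcal{N}(0,\Sigma^{-1})$ independent, and $y^{(i)}=\langle x^{(i)},w_\star\rangle$ for $i\le n$. Let $$Z_0=\begin{bmatrix} x^{(1)} & \cdots & x^{(n)} & x^{(n+1)}\\ y^{(1)} & \cdots & y^{(n)} & 0\end{bmatrix},\qquad M=\begin{bmatrix} I_n & 0\\ 0& 0\end{bmatrix}\in\mathbb{R}^{(n+1)\times(n+1)}.$$ For $A=\{A_i\}_{i=0}^k$ with $A_i\in\mathbb{R}^{d\times d}$ symmetric, let $P_i=\begin{bmatrix}0_{d\times d}&0\\0&1\end{bmatrix}$, $Q_i=\begin{bmatrix}A_i&0\\0&0\end{bmatrix}$, $Z_{i+1}=Z_i+\frac1nP_iZ_iM(Z_i^\top Q_iZ_i)$ for $i=0,\dots,k$, and $f(A)=\mathbb{E}\big[([Z_{k+1}]_{d+1,n+1}+w_\star^\top x^{(n+1)})^2\big]$. Suppose $A_i=a_i\Sigma^{-1}$ with $a_i\in\mathbb{R}$ for all $i$. Let $i,j\in\{0,\dots,k\}$ and define $\tilde A$ by $\tilde A_i=A_j$, $\tilde A_j=A_i$, and $\tilde A_\ell=A_\ell$ for $\ell\notin\{i,j\}$. Then $f(A)=f(\tilde A)$.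
   Context: $[X]_{i,j}$ denotes the $(i,j)$ entry of a matrix; the expectation is over $x^{(1)},\dots,x^{(n+1)},w_\star$. *)

theory Defs
  imports "HOL-Analysis.Analysis" "HOL-Probability.Probability"
begin

text \<open>The data dimension d is CARD('d) (vectors in real^'d); the number of
 in-context samples n is CARD('n). The (d+1) rows of Z are indexed by 'd option, where
 Some a is the a-th data coordinate and None is the last row d+1. The (n+1) columns of Z are
 indexed by 'n option, where Some m is one of the n context samples and None is the query
 column n+1. Thus the entry [Z]_{d+1,n+1} is Z $ None $ None.\<close>

definition pos_def_matrix :: "real^'d^'d \<Rightarrow> bool" where
  "pos_def_matrix S \<longleftrightarrow> transpose S = S \<and> (\<forall>x::real^'d. x \<noteq> 0 \<longrightarrow> x \<bullet> (S *v x) > 0)"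

definition gauss_density :: "real^'d^'d \<Rightarrow> real^'d \<Rightarrow> real" where
  "gauss_density S x =
     exp (- (x \<bullet> (matrix_inv S *v x)) / 2) / sqrt ((2 * pi) ^ CARD('d) * det S)"

definition gauss :: "real^'d^'d \<Rightarrow> (real^'d) measure" where
  "gauss S = density lborel (\<lambda>x. ennreal (gauss_density S x))"

definition joint_law :: "real^'d^'d \<Rightarrow> (('n::finite option \<Rightarrow> real^'d) \<times> (real^'d)) measure" where
  "joint_law S = (PiM UNIV (\<lambda>_. gauss S)) \<Otimes>\<^sub>M gauss (matrix_inv S)"

definition Z0 :: "('n::finite option \<Rightarrow> real^'d) \<Rightarrow> real^'d \<Rightarrow> real^('n option)^('d option)" where
  "Z0 X w = (\<chi> r c. case r of
                Some a \<Rightarrow> X c $ a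
              | None \<Rightarrow> (case c of Some _ \<Rightarrow> X c \<bullet> w | None \<Rightarrow> 0))"

definition Mmat :: "real^('n::finite option)^('n option)" where
  "Mmat = (\<chi> r c. if r = c \<and> r \<noteq> None then 1 else 0)"

definition Pmat :: "real^('d::finite option)^('d option)" where
  "Pmat = (\<chi> r c. if r = None \<and> c = None then 1 else 0)"

definition Qmat :: "real^'d^'d \<Rightarrow> real^('d::finite option)^('d option)" where
  "Qmat B = (\<chi> r c. case (r, c) of (Some a, Some b) \<Rightarrow> B $ a $ b | _ \<Rightarrow> 0)"

definition Zstep :: "real^'d^'d \<Rightarrow> real^('n::finite option)^('d::finite option)
                     \<Rightarrow> real^('n option)^('d option)" where
  "Zstep B Z = Z + (1 / real CARD('n)) *\<^sub>R
      (Pmat ** Z ** Mmat ** (transpose Z ** Qmat B ** Z))"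

fun Zseq :: "(nat \<Rightarrow> real^'d^'d) \<Rightarrow> ('n::finite option \<Rightarrow> real^'d) \<Rightarrow> real^'d
             \<Rightarrow> nat \<Rightarrow> real^('n option)^('d::finite option)" where
  "Zseq A X w 0 = Z0 X w"
| "Zseq A X w (Suc i) = Zstep (A i) (Zseq A X w i)"

text \<open>f(A) for layers A_0..A_k (k+1 layers), with covariance S; the type 'n fixes n.\<close>
definition f_obj :: "real^'d^'d \<Rightarrow> nat \<Rightarrow> (nat \<Rightarrow> real^'d^'d) \<Rightarrow> 'n::finite itself \<Rightarrow> real" where
  "f_obj S k A (_ :: 'n itself) =
     (\<integral>p. (Zseq A (fst p :: 'n option \<Rightarrow> real^'d) (snd p) (Suc k) $ None $ None
            + snd p \<bullet> fst p None)\<^sup>2 \<partial>(joint_law S :: (('n option \<Rightarrow> real^'d) \<times> (real^'d)) measure))"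

end

theory Submission
  imports Defs
begin

text \<open>Each layer changes only the label row of \<open>Z\<close> (the row \<open>d+1\<close>, selected by \<open>P\<close>), and
  the matrix \<open>G = M Z\<^sup>T Q Z\<close> it multiplies that row by depends only on the data rows, which
  therefore stay fixed along the recursion. With \<open>A\<^sub>l = a\<^sub>l \<Sigma>\<^sup>-\<^sup>1\<close>, layer \<open>l\<close> maps the label row
  \<open>r\<close> to \<open>r (I + (a\<^sub>l/n) G)\<close> for one and the same \<open>G\<close>, so any two layers commute. Hence
  permuting the layers leaves \<open>Z\<^sub>k\<^sub>+\<^sub>1\<close> unchanged for every sample, and the expectations agree.\<close>

lemma sum_UNIV_option:
  "(\<Sum>x\<in>(UNIV::'a::finite option set). f x) = f None + (\<Sum>a\<in>UNIV. f (Some a))"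
  by (simp add: UNIV_option_conv sum.reindex)

lemma matrix_add_rdistrib: "(B + C) ** A = B ** A + C ** A"
  by (vector matrix_matrix_mult_def sum.distrib[symmetric] field_simps)

lemma Qmat_None_row [simp]: "Qmat B $ None $ c = 0"
  and Qmat_None_col [simp]: "Qmat B $ r $ None = 0"
  by (simp_all add: Qmat_def split: option.splits)

lemma Qmat_scaleR: "Qmat (c *\<^sub>R B) = c *\<^sub>R Qmat B"
  by (simp add: vec_eq_iff Qmat_def split: option.splits)

lemma Pmat_mult_Some_row [simp]: "(Pmat ** W) $ Some a = 0"
  by (simp add: vec_eq_iff matrix_matrix_mult_def Pmat_def)

lemma Pmat_mult_idem: "Pmat ** (Pmat ** W) = Pmat ** W"
  by (simp add: vec_eq_iff matrix_matrix_mult_def Pmat_def sum_UNIV_option)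

lemma Qmat_quadratic_form_eqI:
  fixes Z1 Z2 :: "real^'n^('d::finite option)"
  assumes "\<And>a. Z1 $ Some a = Z2 $ Some a"
  shows "transpose Z1 ** Qmat B ** Z1 = transpose Z2 ** Qmat B ** Z2"
proof -
  have QZ: "Qmat B ** Z1 = Qmat B ** Z2"
    by (simp add: vec_eq_iff matrix_matrix_mult_def sum_UNIV_option assms)
  have "transpose Z1 ** W = transpose Z2 ** W" if "W $ None = 0" for W :: "real^'m^('d option)"
    using that by (simp add: vec_eq_iff matrix_matrix_mult_def sum_UNIV_option transpose_def assms)
  moreover have "(Qmat B ** Z2) $ None = 0"
    by (simp add: vec_eq_iff matrix_matrix_mult_def)
  ultimately show ?thesis
    by (simp add: matrix_mul_assoc[symmetric] QZ)
qed

definition layer_kernel ::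
    "real^'d^'d \<Rightarrow> real^('n::finite option)^('d::finite option) \<Rightarrow> real^('n option)^('n option)" where
  "layer_kernel B Z = Mmat ** (transpose Z ** Qmat B ** Z)"

lemma layer_kernel_add_label_row:
  assumes "\<And>a. V $ Some a = 0"
  shows "layer_kernel B (Z + V) = layer_kernel B Z"
  unfolding layer_kernel_def
  by (subst Qmat_quadratic_form_eqI[where ?Z2.0 = Z]) (simp_all add: assms)

lemma Zstep_scaleR:
  fixes Z :: "real^('n::finite option)^('d::finite option)"
  shows "Zstep (c *\<^sub>R B) Z = Z + (c / real CARD('n)) *\<^sub>R (Pmat ** (Z ** layer_kernel B Z))"
  by (simp add: Zstep_def layer_kernel_def Qmat_scaleR matrix_scalar_ac scalar_matrix_assoc
      matrix_mul_assoc)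

lemma Zstep_scaleR_twice:
  fixes Z :: "real^('n::finite option)^('d::finite option)" and B :: "real^'d^'d"
  defines "G \<equiv> layer_kernel B Z" and "n \<equiv> real CARD('n)"
  shows "Zstep (c *\<^sub>R B) (Zstep (e *\<^sub>R B) Z)
       = Z + ((c + e) / n) *\<^sub>R (Pmat ** (Z ** G)) + (c * e / n\<^sup>2) *\<^sub>R (Pmat ** (Z ** G ** G))"
proof -
  let ?Z' = "Z + (e / n) *\<^sub>R (Pmat ** (Z ** G))"
  have kernel: "layer_kernel B ?Z' = G"
    unfolding G_def by (rule layer_kernel_add_label_row) (simp add: scalar_matrix_assoc[symmetric])
  have "Pmat ** (?Z' ** G) = Pmat ** (Z ** G) + (e / n) *\<^sub>R (Pmat ** (Z ** G ** G))"
    by (simp add: matrix_add_rdistrib matrix_add_ldistrib matrix_scalar_ac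
        scalar_matrix_assoc[symmetric] matrix_mul_assoc Pmat_mult_idem[unfolded matrix_mul_assoc])
  then show ?thesis
    unfolding Zstep_scaleR[of e] Zstep_scaleR[of c] kernel G_def[symmetric] n_def[symmetric]
    by (simp add: algebra_simps add_divide_distrib power2_eq_square)
qed

lemma Zstep_scaleR_commute:
  "Zstep (c *\<^sub>R B) (Zstep (e *\<^sub>R B) Z) = Zstep (e *\<^sub>R B) (Zstep (c *\<^sub>R B) Z)"
  by (simp add: Zstep_scaleR_twice algebra_simps)

lemma Zseq_eq_fold: "Zseq A X w m = fold (\<lambda>l. Zstep (A l)) [0..<m] (Z0 X w)"
  by (induction m) auto

lemma Zseq_permute_commuting_layers:
  fixes X :: "'n::finite option \<Rightarrow> real^'d"
  assumes "\<sigma> permutes {..<m}"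
    and "\<And>l l' (Z :: real^('n option)^('d option)).
           l < m \<Longrightarrow> l' < m \<Longrightarrow> Zstep (A l) (Zstep (A l') Z) = Zstep (A l') (Zstep (A l) Z)"
  shows "Zseq (A \<circ> \<sigma>) X w m = Zseq A X w m"
proof -
  have "mset [0..<m] = mset (map \<sigma> [0..<m])"
    using permutes_image_mset[OF assms(1)] by (simp add: atLeast0LessThan)
  then have "fold (\<lambda>l. Zstep (A l)) [0..<m] (Z0 X w)
      = fold (\<lambda>l. Zstep (A l)) (map \<sigma> [0..<m]) (Z0 X w)"
    by (intro fun_cong[OF fold_multiset_equiv]) (auto simp: fun_eq_iff intro: assms(2))
  then show ?thesis
    by (simp add: Zseq_eq_fold fold_map comp_def)
qed

theorem lemma4:
  fixes S :: "real^'d^'d" and k :: nat and A :: "nat \<Rightarrow> real^'d^'d" and a :: "nat \<Rightarrow> real"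
    and i j :: nat
  assumes "pos_def_matrix S"
    and "\<forall>l\<le>k. A l = a l *\<^sub>R matrix_inv S"
    and "i \<le> k" and "j \<le> k"
  shows "f_obj S k A TYPE('n::finite)
       = f_obj S k (\<lambda>l. if l = i then A j else if l = j then A i else A l) TYPE('n)"
proof -
  have swap:
    "(\<lambda>l. if l = i then A j else if l = j then A i else A l) = A \<circ> Transposition.transpose i j"
    by (auto simp: Transposition.transpose_def)
  have "Transposition.transpose i j permutes {..<Suc k}"
    using assms(3,4) by (intro permutes_swap_id) auto
  moreover have "Zstep (A l) (Zstep (A l') Z) = Zstep (A l') (Zstep (A l) Z)"
    if "l < Suc k" "l' < Suc k" for l l' and Z :: "real^('n option)^('d option)"
    using assms(2) that Zstep_scaleR_commute by (metis less_Suc_eq_le)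
  ultimately have "Zseq (A \<circ> Transposition.transpose i j) X w (Suc k) = Zseq A X w (Suc k)"
    for X :: "'n option \<Rightarrow> real^'d" and w
    by (rule Zseq_permute_commuting_layers)
  then show ?thesis
    unfolding f_obj_def swap by simp
qed

end
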